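(* For the uniform-cost inverse fractional knapsack problem under the $l_\infty$-norm (defined in the context), if it has an optimal solution, then there exists an optimal solution $(u,v,\lambda,\mu)$ with $v_i=0$ for all $i\in I^1$ and $u_i=\mu_i=0$ for all $i\in I^0$; i.e., profits of items in $I^1$ are only increased, profits of items in $I^0$ are only reduced, and costs of items in $I^0$ are only increased.
   Context: The fractional knapsack problem with profits $q_i$, costs $d_i$ and budget $b$ is $\max\{\sum_i q_ix_i:\sum_i d_ix_i\le b,\ 0\le x_i\le 1\}$. Given positive integers $p_i,c_i$ ($i=1,\dots,n$), a budget $b$, a vector $x^*\in\{0,1\}^n$, $I^1=\{i:x^*_i=1\}$, $I^0=\{i:x^*_i=0\}$, and nonnegative integer bounds $\bar u_i,\bar v_i,\bar\lambda_i,\bar\mu_i$. A feasible modification is $(u,v,\lambda,\mu)$ with $u_i\in[0,\bar u_i]\cap\mathbb Z$, $v_i\in[0,\bar v_i]\cap\mathbb Z$, $\lambda_i\in[0,\bar\lambda_i]\cap\mathbb Z$, $\mu_i\in[0,\bar\mu_i]\cap\mathbb Z$, giving $\tilde p_i=p_i+u_i-v_i$, $\tilde c_i=c_i+\lambda_i-\mu_i$. The problem asks for a feasible modification such that $x^*$ is an optimal solution of the fractional knapsack problem with profits $\tilde p_i$, costs $\tilde c_i$ and budget $b$, minimizing $\max_{1\le i\le n}\max\{u_i,v_i,\lambda_i,\mu_i\}$. *)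

theory Defs
  imports Complex_Main
begin

definition frac_feasible :: "nat \<Rightarrow> (nat \<Rightarrow> real) \<Rightarrow> real \<Rightarrow> (nat \<Rightarrow> real) \<Rightarrow> bool" where
  "frac_feasible n d b x \<longleftrightarrow>
     (\<forall>i\<in>{1..n}. 0 \<le> x i \<and> x i \<le> 1) \<and> (\<Sum>i=1..n. d i * x i) \<le> b"

definition frac_optimal ::
  "nat \<Rightarrow> (nat \<Rightarrow> real) \<Rightarrow> (nat \<Rightarrow> real) \<Rightarrow> real \<Rightarrow> (nat \<Rightarrow> real) \<Rightarrow> bool" where
  "frac_optimal n q d b x \<longleftrightarrow> frac_feasible n d b x \<and>
     (\<forall>y. frac_feasible n d b y \<longrightarrow> (\<Sum>i=1..n. q i * y i) \<le> (\<Sum>i=1..n. q i * x i))"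

definition feasible_mod ::
  "nat \<Rightarrow> (nat \<Rightarrow> int) \<Rightarrow> (nat \<Rightarrow> int) \<Rightarrow> (nat \<Rightarrow> int) \<Rightarrow> (nat \<Rightarrow> int)
   \<Rightarrow> (nat \<Rightarrow> int) \<Rightarrow> (nat \<Rightarrow> int) \<Rightarrow> (nat \<Rightarrow> int) \<Rightarrow> (nat \<Rightarrow> int) \<Rightarrow> bool" where
  "feasible_mod n ub vb lb mb u v l m \<longleftrightarrow>
     (\<forall>i\<in>{1..n}. 0 \<le> u i \<and> u i \<le> ub i \<and> 0 \<le> v i \<and> v i \<le> vb i \<and>
                  0 \<le> l i \<and> l i \<le> lb i \<and> 0 \<le> m i \<and> m i \<le> mb i)"

definition inv_admissible ::
  "nat \<Rightarrow> (nat \<Rightarrow> int) \<Rightarrow> (nat \<Rightarrow> int) \<Rightarrow> real \<Rightarrow> (nat \<Rightarrow> real)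
   \<Rightarrow> (nat \<Rightarrow> int) \<Rightarrow> (nat \<Rightarrow> int) \<Rightarrow> (nat \<Rightarrow> int) \<Rightarrow> (nat \<Rightarrow> int)
   \<Rightarrow> (nat \<Rightarrow> int) \<Rightarrow> (nat \<Rightarrow> int) \<Rightarrow> (nat \<Rightarrow> int) \<Rightarrow> (nat \<Rightarrow> int) \<Rightarrow> bool" where
  "inv_admissible n p c b xs ub vb lb mb u v l m \<longleftrightarrow>
     feasible_mod n ub vb lb mb u v l m \<and>
     frac_optimal n (\<lambda>i. real_of_int (p i + u i - v i)) (\<lambda>i. real_of_int (c i + l i - m i)) b xs"

text \<open>l_infinity objective: max over items of max{u_i,v_i,lambda_i,mu_i}
(0 is inserted only to make the Max well-defined for n = 0; all entries are >= 0).\<close>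
definition linf_cost ::
  "nat \<Rightarrow> (nat \<Rightarrow> int) \<Rightarrow> (nat \<Rightarrow> int) \<Rightarrow> (nat \<Rightarrow> int) \<Rightarrow> (nat \<Rightarrow> int) \<Rightarrow> int" where
  "linf_cost n u v l m = Max (insert 0 ((\<lambda>i. max (max (u i) (v i)) (max (l i) (m i))) ` {1..n}))"

definition inv_optimal ::
  "nat \<Rightarrow> (nat \<Rightarrow> int) \<Rightarrow> (nat \<Rightarrow> int) \<Rightarrow> real \<Rightarrow> (nat \<Rightarrow> real)
   \<Rightarrow> (nat \<Rightarrow> int) \<Rightarrow> (nat \<Rightarrow> int) \<Rightarrow> (nat \<Rightarrow> int) \<Rightarrow> (nat \<Rightarrow> int)
   \<Rightarrow> (nat \<Rightarrow> int) \<Rightarrow> (nat \<Rightarrow> int) \<Rightarrow> (nat \<Rightarrow> int) \<Rightarrow> (nat \<Rightarrow> int) \<Rightarrow> bool" where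
  "inv_optimal n p c b xs ub vb lb mb u v l m \<longleftrightarrow>
     inv_admissible n p c b xs ub vb lb mb u v l m \<and>
     (\<forall>u' v' l' m'. inv_admissible n p c b xs ub vb lb mb u' v' l' m' \<longrightarrow>
        linf_cost n u v l m \<le> linf_cost n u' v' l' m')"

end

theory Submission
  imports Defs
begin

text \<open>Take any optimal modification and discard the components that work against \<open>x*\<close>:
decreasing the profit of an item with \<open>x*\<^sub>i = 1\<close>, increasing the profit of an item with
\<open>x*\<^sub>i = 0\<close>, or decreasing the cost of an item with \<open>x*\<^sub>i = 0\<close>. The profit changes only make
\<open>x*\<close> relatively more profitable than every other fractional solution, and the cost change
only shrinks the feasible region without affecting the cost of \<open>x*\<close>; so \<open>x*\<close> stays optimal.
Setting nonnegative components to zero cannot increase the \<open>\<ell>\<^sub>\<infinity>\<close>-cost.\<close>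

lemma frac_feasible_cost_mono:
  assumes "\<forall>i\<in>{1..n}. d i \<le> d' i" and "frac_feasible n d' b y"
  shows "frac_feasible n d b y"
proof -
  have y01: "\<forall>i\<in>{1..n}. 0 \<le> y i \<and> y i \<le> 1"
    using assms(2) unfolding frac_feasible_def by blast
  have "(\<Sum>i=1..n. d i * y i) \<le> (\<Sum>i=1..n. d' i * y i)"
    using assms(1) y01 by (intro sum_mono) (simp add: mult_right_mono)
  then show ?thesis
    using assms(2) unfolding frac_feasible_def by auto
qed

lemma frac_optimal_shift:
  assumes opt: "frac_optimal n q d b x"
    and x01: "\<forall>i\<in>{1..n}. x i = 0 \<or> x i = 1"
    and cost_up: "\<forall>i\<in>{1..n}. d i \<le> d' i"
    and cost_fixed: "\<forall>i\<in>{1..n}. x i = 1 \<longrightarrow> d' i = d i"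
    and profit_down: "\<forall>i\<in>{1..n}. x i = 0 \<longrightarrow> q' i \<le> q i"
    and profit_up: "\<forall>i\<in>{1..n}. x i = 1 \<longrightarrow> q i \<le> q' i"
  shows "frac_optimal n q' d' b x"
  unfolding frac_optimal_def
proof (intro conjI allI impI)
  have "(\<Sum>i=1..n. d' i * x i) = (\<Sum>i=1..n. d i * x i)"
    using x01 cost_fixed by (intro sum.cong) auto
  then show "frac_feasible n d' b x"
    using opt unfolding frac_optimal_def frac_feasible_def by simp
next
  fix y assume fy: "frac_feasible n d' b y"
  have y01: "\<forall>i\<in>{1..n}. 0 \<le> y i \<and> y i \<le> 1"
    using fy unfolding frac_feasible_def by blast
  have "(\<Sum>i=1..n. q' i * y i - q' i * x i) \<le> (\<Sum>i=1..n. q i * y i - q i * x i)"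
  proof (rule sum_mono)
    fix i assume i: "i \<in> {1..n}"
    from x01 i consider "x i = 0" | "x i = 1" by blast
    then show "q' i * y i - q' i * x i \<le> q i * y i - q i * x i"
    proof cases
      case 1
      then show ?thesis using profit_down y01 i by (simp add: mult_right_mono)
    next
      case 2
      then have "(q' i - q i) * (y i - 1) \<le> 0"
        using profit_up y01 i by (simp add: mult_nonneg_nonpos)
      then show ?thesis using 2 by (simp add: algebra_simps)
    qed
  qed
  also have "\<dots> \<le> 0"
    using opt frac_feasible_cost_mono[OF cost_up fy]
    unfolding frac_optimal_def by (simp add: sum_subtractf)
  finally show "(\<Sum>i=1..n. q' i * y i) \<le> (\<Sum>i=1..n. q' i * x i)"
    by (simp add: sum_subtractf)
qed

lemma feasible_mod_zero_entries:
  assumes "feasible_mod n ub vb lb mb u v l m"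
    and "\<forall>i\<in>{1..n}. u' i \<in> {0, u i} \<and> v' i \<in> {0, v i} \<and> l' i \<in> {0, l i} \<and> m' i \<in> {0, m i}"
  shows "feasible_mod n ub vb lb mb u' v' l' m'"
  using assms unfolding feasible_mod_def by fastforce

lemma linf_cost_mono:
  assumes "\<forall>i\<in>{1..n}. u' i \<le> u i \<and> v' i \<le> v i \<and> l' i \<le> l i \<and> m' i \<le> m i"
  shows "linf_cost n u' v' l' m' \<le> linf_cost n u v l m"
  unfolding linf_cost_def
proof (rule Max.boundedI)
  let ?M = "Max (insert 0 ((\<lambda>i. max (max (u i) (v i)) (max (l i) (m i))) ` {1..n}))"
  fix a assume "a \<in> insert 0 ((\<lambda>i. max (max (u' i) (v' i)) (max (l' i) (m' i))) ` {1..n})"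
  then consider "a = 0"
    | i where "i \<in> {1..n}" "a = max (max (u' i) (v' i)) (max (l' i) (m' i))"
    by blast
  then show "a \<le> ?M"
  proof cases
    case 1
    then show ?thesis by (simp add: Max_ge_iff)
  next
    case (2 i)
    then have "a \<le> max (max (u i) (v i)) (max (l i) (m i))"
      using assms by fastforce
    also have "\<dots> \<le> ?M"
      using 2 by (intro Max_ge) auto
    finally show ?thesis .
  qed
qed simp_all

lemma inv_admissible_sign_restricted:
  assumes adm: "inv_admissible n p c b xs ub vb lb mb u v l m"
    and xs01: "\<forall>i\<in>{1..n}. xs i = 0 \<or> xs i = 1"
  shows "inv_admissible n p c b xs ub vb lb mb
           (\<lambda>i. if xs i = 0 then 0 else u i) (\<lambda>i. if xs i = 1 then 0 else v i)
           l (\<lambda>i. if xs i = 0 then 0 else m i)"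
proof -
  have fm: "feasible_mod n ub vb lb mb u v l m"
    and opt: "frac_optimal n (\<lambda>i. real_of_int (p i + u i - v i))
                (\<lambda>i. real_of_int (c i + l i - m i)) b xs"
    using adm unfolding inv_admissible_def by blast+
  have nonneg: "\<forall>i\<in>{1..n}. 0 \<le> u i \<and> 0 \<le> v i \<and> 0 \<le> m i"
    using fm unfolding feasible_mod_def by blast
  show ?thesis
    unfolding inv_admissible_def
  proof
    show "feasible_mod n ub vb lb mb (\<lambda>i. if xs i = 0 then 0 else u i)
            (\<lambda>i. if xs i = 1 then 0 else v i) l (\<lambda>i. if xs i = 0 then 0 else m i)"
      by (rule feasible_mod_zero_entries[OF fm]) simp
    show "frac_optimal n (\<lambda>i. real_of_int (p i + (if xs i = 0 then 0 else u i)
                                                - (if xs i = 1 then 0 else v i)))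
            (\<lambda>i. real_of_int (c i + l i - (if xs i = 0 then 0 else m i))) b xs"
      by (rule frac_optimal_shift[OF opt xs01]) (use nonneg in auto)
  qed
qed

theorem mainTheorem5:
  fixes n :: nat and p c ub vb lb mb :: "nat \<Rightarrow> int" and b :: real and xs :: "nat \<Rightarrow> real"
  assumes "\<forall>i\<in>{1..n}. p i > 0 \<and> c i > 0"
    and "\<forall>i\<in>{1..n}. ub i \<ge> 0 \<and> vb i \<ge> 0 \<and> lb i \<ge> 0 \<and> mb i \<ge> 0"
    and "\<forall>i\<in>{1..n}. xs i = 0 \<or> xs i = 1"
    and "\<exists>u v l m. inv_optimal n p c b xs ub vb lb mb u v l m"
  shows "\<exists>u v l m. inv_optimal n p c b xs ub vb lb mb u v l m \<and>
           (\<forall>i\<in>{1..n}. xs i = 1 \<longrightarrow> v i = 0) \<and>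
           (\<forall>i\<in>{1..n}. xs i = 0 \<longrightarrow> u i = 0 \<and> m i = 0)"
proof -
  obtain u v l m where opt: "inv_optimal n p c b xs ub vb lb mb u v l m"
    using assms(4) by blast
  define u' where "u' = (\<lambda>i. if xs i = 0 then 0 else u i)"
  define v' where "v' = (\<lambda>i. if xs i = 1 then 0 else v i)"
  define m' where "m' = (\<lambda>i. if xs i = 0 then 0 else m i)"
  have adm: "inv_admissible n p c b xs ub vb lb mb u v l m"
    using opt unfolding inv_optimal_def by blast
  have adm': "inv_admissible n p c b xs ub vb lb mb u' v' l m'"
    unfolding u'_def v'_def m'_def by (rule inv_admissible_sign_restricted[OF adm assms(3)])
  have "\<forall>i\<in>{1..n}. 0 \<le> u i \<and> 0 \<le> v i \<and> 0 \<le> m i"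
    using adm unfolding inv_admissible_def feasible_mod_def by blast
  then have "linf_cost n u' v' l m' \<le> linf_cost n u v l m"
    unfolding u'_def v'_def m'_def by (intro linf_cost_mono) auto
  with opt adm' have "inv_optimal n p c b xs ub vb lb mb u' v' l m'"
    unfolding inv_optimal_def by fastforce
  then show ?thesis
    unfolding u'_def v'_def m'_def by fastforce
qed

end
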